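(* Let $M$ be a module over the Laurent polynomial ring $\mathbb{Z}[t^{\pm 1}]$, equipped with the binary operation $a * b = ta + (1-t)b$ (the Alexander quandle structure on $M$). Then $(M,* )$ is a Rump right quasigroup if and only if $(1-t)^{2}m = 0$ for every $m \in M$.
   Context: A magma $(X,\cdot)$ is a right quasigroup if every right translation $y \mapsto yx$ is a bijection of $X$. A Rump right quasigroup (cycle set) is a right quasigroup satisfying the identity $(zx)(yx) = (zy)(xy)$ for all $x,y,z \in X$. *)

theory Defs
  imports Main
begin

text \<open>A module over the Laurent polynomial ring Z[t, t^-1] is the same thing as an
abelian group M together with an additive automorphism t of M (the action of the
variable t); t^-1 acts by the inverse automorphism.\<close>

definition laurent_module :: "('a::ab_group_add \<Rightarrow> 'a) \<Rightarrow> bool" where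
  "laurent_module t \<longleftrightarrow> bij t \<and> (\<forall>a b. t (a + b) = t a + t b)"

definition alex_op :: "('a::ab_group_add \<Rightarrow> 'a) \<Rightarrow> 'a \<Rightarrow> 'a \<Rightarrow> 'a" where
  "alex_op t a b = t a + (b - t b)"

definition right_quasigroup :: "('a \<Rightarrow> 'a \<Rightarrow> 'a) \<Rightarrow> bool" where
  "right_quasigroup op \<longleftrightarrow> (\<forall>x. bij (\<lambda>y. op y x))"

definition rump_right_quasigroup :: "('a \<Rightarrow> 'a \<Rightarrow> 'a) \<Rightarrow> bool" where
  "rump_right_quasigroup op \<longleftrightarrow> right_quasigroup op \<and>
     (\<forall>x y z. op (op z x) (op y x) = op (op z y) (op x y))"

definition one_minus :: "('a::ab_group_add \<Rightarrow> 'a) \<Rightarrow> 'a \<Rightarrow> 'a" where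
  "one_minus t m = m - t m"

end

theory Submission
  imports Defs "HOL.Modules"
begin

text \<open>Both sides of the Rump identity for a b = t a + (1 - t) b are linear in x, y, z, and
their difference is (1 - t)^2 (x - y), because t commutes with 1 - t. Hence the identity holds
iff (1 - t)^2 annihilates M, while the right translations y \<mapsto> t y + (1 - t) x are always
bijective since t is.\<close>

lemma laurent_module_additive: "laurent_module t \<Longrightarrow> additive t"
  unfolding laurent_module_def by (simp add: additive.intro)

lemma right_quasigroup_alex_op:
  fixes t :: "'a::ab_group_add \<Rightarrow> 'a"
  assumes "bij t"
  shows "right_quasigroup (alex_op t)"
  unfolding right_quasigroup_def
proof
  fix x :: 'a
  have "(\<lambda>y. alex_op t y x) = (\<lambda>u. u + (x - t x)) \<circ> t"
    by (auto simp: alex_op_def)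
  then show "bij (\<lambda>y. alex_op t y x)"
    using bij_comp[OF assms bij_plus_right] by simp
qed

lemma alex_op_rump_defect:
  fixes t :: "'a::ab_group_add \<Rightarrow> 'a"
  assumes "additive t"
  shows "alex_op t (alex_op t z x) (alex_op t y x) - alex_op t (alex_op t z y) (alex_op t x y)
           = one_minus t (one_minus t (x - y))"
  using assms
  by (simp add: alex_op_def one_minus_def additive.add additive.diff algebra_simps)

lemma alex_op_rump_identity_iff:
  fixes t :: "'a::ab_group_add \<Rightarrow> 'a"
  assumes "additive t"
  shows "(\<forall>x y z. alex_op t (alex_op t z x) (alex_op t y x) = alex_op t (alex_op t z y) (alex_op t x y))
           \<longleftrightarrow> (\<forall>m. one_minus t (one_minus t m) = 0)"
proof
  assume "\<forall>x y z. alex_op t (alex_op t z x) (alex_op t y x) = alex_op t (alex_op t z y) (alex_op t x y)"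
  then show "\<forall>m. one_minus t (one_minus t m) = 0"
    using alex_op_rump_defect[OF assms, where y = 0] by (metis diff_self diff_zero)
next
  assume "\<forall>m. one_minus t (one_minus t m) = 0"
  then show "\<forall>x y z. alex_op t (alex_op t z x) (alex_op t y x) = alex_op t (alex_op t z y) (alex_op t x y)"
    using alex_op_rump_defect[OF assms] by (metis eq_iff_diff_eq_0)
qed

theorem mainTheorem1:
  fixes t :: "'a::ab_group_add \<Rightarrow> 'a"
  assumes "laurent_module t"
  shows "rump_right_quasigroup (alex_op t) \<longleftrightarrow>
         (\<forall>m. one_minus t (one_minus t m) = 0)"
proof -
  have "right_quasigroup (alex_op t)"
    using assms by (simp add: laurent_module_def right_quasigroup_alex_op)
  then show ?thesis
    unfolding rump_right_quasigroup_def
    using alex_op_rump_identity_iff[OF laurent_module_additive[OF assms]] by simp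
qed

end
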